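(* Let $\mathbf{y}\in\mathbb{R}^n$ with $\sum_i y_i=0$, and let $\mathbf{X}\in\mathbb{R}^{n\times p}$ have centered columns with $\frac1n\sum_i x_{ij}^2=1$, whose $p$ columns are partitioned into $G$ non-overlapping groups, group $g$ having $W_g$ columns forming the submatrix $\mathbf{X}_g\in\mathbb{R}^{n\times W_g}$, and assume $\frac1n\mathbf{X}_g^T\mathbf{X}_g=\mathbf{I}$ for all $g=1,\ldots,G$. For $\lambda>0$ let $$\widehat{\boldsymbol\beta}(\lambda)=\operatorname*{argmin}_{\boldsymbol\beta\in\mathbb{R}^p}\ \frac{1}{2n}\Big\|\mathbf{y}-\sum_{g=1}^G\mathbf{X}_g\boldsymbol\beta_g\Big\|^2+\lambda\sum_{g=1}^G\sqrt{W_g}\|\boldsymbol\beta_g\|,$$ where $\boldsymbol\beta=(\boldsymbol\beta_1^T,\ldots,\boldsymbol\beta_G^T)^T$ with $\boldsymbol\beta_g\in\mathbb{R}^{W_g}$. Let $\lambda_m=\max_g\frac{\|\mathbf{X}_g^T\mathbf{y}\|}{n\sqrt{W_g}}$, let $\mathbf{X}_*$ be the submatrix of a group attaining this maximum and $W_*$ its number of columns, and let $\bar{\mathbf{v}}=\mathbf{X}_*\mathbf{X}_*^T\mathbf{y}$. Then for any $\lambda\in(0,\lambda_m]$ and $g=1,\ldots,G$, we have $\widehat{\boldsymbol\beta}_g(\lambda)=\mathbf{0}$ if $$\sqrt{(\lambda+\lambda_m)^2\|\mathbf{X}_g^T\mathbf{y}\|^2-\frac{2(\lambda_m^2-\lam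bda^2)\,\mathbf{y}^T\mathbf{X}_g\mathbf{X}_g^T\bar{\mathbf{v}}}{n}+\frac{(\lambda_m-\lambda)^2\|\mathbf{X}_g^T\bar{\mathbf{v}}\|^2}{n^2}}<2n\lambda\lambda_m\sqrt{W_g}-(\lambda_m-\lambda)\sqrt{n\|\mathbf{y}\|^2-n^2\lambda_m^2W_*}.$$
   Context: $\|\cdot\|$ denotes the Euclidean norm of a vector; $\widehat{\boldsymbol\beta}_g(\lambda)$ is the block of the group lasso solution corresponding to group $g$. *)

theory Defs
  imports "HOL-Analysis.Analysis"
begin

text \<open>Groups are given by a map grp from column indices to group labels.
  grp_block grp g v is the block v_g of v, embedded in R^p with zeros outside group g
  (so its Euclidean norm is the norm of the block).\<close>

definition grp_block :: "('p \<Rightarrow> 'g) \<Rightarrow> 'g \<Rightarrow> real ^ 'p \<Rightarrow> real ^ 'p" where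
  "grp_block grp g v = (\<chi> j. if grp j = g then v $ j else 0)"

definition grp_size :: "('p::finite \<Rightarrow> 'g) \<Rightarrow> 'g \<Rightarrow> nat" where
  "grp_size grp g = card {j. grp j = g}"

definition group_lasso_obj ::
  "real ^ 'p ^ 'n \<Rightarrow> real ^ 'n \<Rightarrow> ('p::finite \<Rightarrow> 'g::finite) \<Rightarrow> real \<Rightarrow> real ^ 'p \<Rightarrow> real" where
  "group_lasso_obj X y grp lam \<beta> =
     (1 / (2 * real CARD('n))) * (norm (y - (\<Sum>g\<in>UNIV. X *v grp_block grp g \<beta>)))\<^sup>2
     + lam * (\<Sum>g\<in>UNIV. sqrt (real (grp_size grp g)) * norm (grp_block grp g \<beta>))"

definition is_group_lasso_sol ::
  "real ^ 'p ^ 'n \<Rightarrow> real ^ 'n \<Rightarrow> ('p::finite \<Rightarrow> 'g::finite) \<Rightarrow> real \<Rightarrow> real ^ 'p \<Rightarrow> bool" where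
  "is_group_lasso_sol X y grp lam \<beta> \<longleftrightarrow>
     (\<forall>\<beta>'. group_lasso_obj X y grp lam \<beta> \<le> group_lasso_obj X y grp lam \<beta>')"

definition lambda_max ::
  "real ^ 'p ^ 'n \<Rightarrow> real ^ 'n \<Rightarrow> ('p::finite \<Rightarrow> 'g::finite) \<Rightarrow> real" where
  "lambda_max X y grp =
     Max ((\<lambda>g. norm (grp_block grp g (transpose X *v y))
               / (real CARD('n) * sqrt (real (grp_size grp g)))) ` UNIV)"

end

theory Submission
  imports Defs
begin

text \<open>
  Write \<open>r = y - X\<beta>\<close> for the residual of a solution. The optimality conditions of the group lasso
  say that \<open>\<parallel>X\<^sub>h\<^sup>T r\<parallel> \<le> n\<lambda>\<surd>W\<^sub>h\<close> for every group and \<open>X\<^sub>h\<^sup>T r \<bullet> \<beta>\<^sub>h = n\<lambda>\<surd>W\<^sub>h \<parallel>\<beta>\<^sub>h\<parallel>\<close>, so a strict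
  inequality \<open>\<parallel>X\<^sub>g\<^sup>T r\<parallel> < n\<lambda>\<surd>W\<^sub>g\<close> forces \<open>\<beta>\<^sub>g = 0\<close>. To bound \<open>X\<^sub>g\<^sup>T r\<close> without knowing \<open>\<beta>\<close>, two
  half-spaces containing \<open>r\<close> are used: testing optimality against the dual feasible point
  \<open>y / (n\<lambda>\<^sub>m)\<close> gives \<open>\<lambda>\<langle>y - r, y\<rangle> \<le> \<lambda>\<^sub>m\<langle>y - r, r\<rangle>\<close>, and the dual constraint at a maximising
  group gives \<open>\<lambda>\<^sub>m\<langle>r, v\<rangle> \<le> \<lambda>\<langle>y, v\<rangle>\<close>. Together they place \<open>2\<lambda>\<^sub>m r\<close> in the ball of radius
  \<open>(\<lambda>\<^sub>m - \<lambda>)\<parallel>y - v/n\<parallel>\<close> around \<open>(\<lambda> + \<lambda>\<^sub>m)y - (\<lambda>\<^sub>m - \<lambda>)v/n\<close>. Within-group orthonormality makes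
  \<open>X\<^sub>g\<^sup>T\<close> have norm \<open>\<surd>n\<close> and \<open>v/n\<close> an orthogonal projection of \<open>y\<close>, and the stated rule is exactly
  the resulting bound on \<open>\<parallel>X\<^sub>g\<^sup>T r\<parallel>\<close>.
\<close>

(* The statement is phrased with transpose X *v z, which this simp rule would rewrite away. *)
declare transpose_matrix_vector [simp del]

abbreviation group_weight :: "('p::finite \<Rightarrow> 'g) \<Rightarrow> 'g \<Rightarrow> real" where
  "group_weight grp g \<equiv> sqrt (real (grp_size grp g))"

lemma grp_size_pos: "grp j = h \<Longrightarrow> 0 < grp_size grp h"
  by (auto simp: grp_size_def card_gt_0_iff)

lemma inner_matrix_vector_mult_transpose:
  fixes A :: "real^'m^'n"
  shows "(A *v x) \<bullet> z = x \<bullet> (transpose A *v z)"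
  by (metis dot_lmul_matrix vector_transpose_matrix)

lemma grp_block_add: "grp_block grp g (a + b) = grp_block grp g a + grp_block grp g b"
  by (simp add: grp_block_def vec_eq_iff)

lemma grp_block_diff: "grp_block grp g (a - b) = grp_block grp g a - grp_block grp g b"
  by (simp add: grp_block_def vec_eq_iff)

lemma grp_block_scaleR: "grp_block grp g (c *\<^sub>R a) = c *\<^sub>R grp_block grp g a"
  by (simp add: grp_block_def vec_eq_iff)

lemma grp_block_grp_block:
  "grp_block grp g (grp_block grp h v) = (if g = h then grp_block grp h v else 0)"
  by (simp add: grp_block_def vec_eq_iff)

lemma inner_grp_block_left: "grp_block grp g a \<bullet> b = grp_block grp g a \<bullet> grp_block grp g b"
  by (simp add: grp_block_def inner_vec_def) (rule sum.cong, auto)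

lemma sum_grp_block: "(\<Sum>g\<in>UNIV. grp_block grp g v) = v" for grp :: "'p::finite \<Rightarrow> 'g::finite"
  by (simp add: grp_block_def vec_eq_iff sum_component)

lemma inner_eq_sum_grp_block:
  fixes grp :: "'p::finite \<Rightarrow> 'g::finite"
  shows "x \<bullet> z = (\<Sum>h\<in>UNIV. grp_block grp h x \<bullet> grp_block grp h z)"
proof -
  have "x \<bullet> z = (\<Sum>h\<in>UNIV. grp_block grp h x \<bullet> z)"
    by (simp add: sum_grp_block flip: inner_sum_left)
  also have "\<dots> = (\<Sum>h\<in>UNIV. grp_block grp h x \<bullet> grp_block grp h z)"
    by (intro sum.cong refl inner_grp_block_left)
  finally show ?thesis .
qed

lemma inner_matrix_vector_mult_grp_block:
  fixes X :: "real^'p^'n"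
  shows "z \<bullet> (X *v grp_block grp g v) = grp_block grp g (transpose X *v z) \<bullet> grp_block grp g v"
proof -
  have "z \<bullet> (X *v grp_block grp g v) = grp_block grp g v \<bullet> (transpose X *v z)"
    by (subst inner_commute) (rule inner_matrix_vector_mult_transpose)
  also have "\<dots> = grp_block grp g v \<bullet> grp_block grp g (transpose X *v z)"
    by (rule inner_grp_block_left)
  finally show ?thesis
    by (simp add: inner_commute)
qed

lemma norm_scaleR_diff_power2:
  fixes a b :: "'a::real_inner"
  shows "(norm (s *\<^sub>R a - u *\<^sub>R b))\<^sup>2 = s\<^sup>2 * (norm a)\<^sup>2 - 2 * s * u * (a \<bullet> b) + u\<^sup>2 * (norm b)\<^sup>2"
  unfolding power2_norm_eq_inner
  by (simp add: inner_diff_left inner_diff_right inner_commute power2_eq_square)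

lemma le_if_power2_le_mult:
  fixes a b :: real
  assumes "a\<^sup>2 \<le> b * a" and "0 \<le> b"
  shows "a \<le> b"
proof (cases "a \<le> 0")
  case True
  then show ?thesis
    using assms(2) by linarith
next
  case False
  then show ?thesis
    using assms(1) by (simp add: power2_eq_square)
qed

section \<open>Designs with orthogonal columns within each group\<close>

definition groupwise_orthogonal :: "real^'p^'n \<Rightarrow> ('p \<Rightarrow> 'g) \<Rightarrow> real \<Rightarrow> bool" where
  "groupwise_orthogonal X grp c \<longleftrightarrow>
     (\<forall>j k. grp j = grp k \<longrightarrow> (\<Sum>i\<in>UNIV. X $ i $ j * X $ i $ k) = (if j = k then c else 0))"

lemma groupwise_orthogonal_gram:
  assumes "groupwise_orthogonal X grp c"
  shows "grp_block grp g (transpose X *v (X *v grp_block grp g w)) = c *\<^sub>R grp_block grp g w"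
proof -
  have "((transpose X ** X) *v grp_block grp g w) $ j = c * w $ j" if "grp j = g" for j
  proof -
    have "(transpose X ** X) $ j $ k * grp_block grp g w $ k = (if k = j then c * w $ j else 0)" for k
      using assms that
      by (auto simp: groupwise_orthogonal_def matrix_matrix_mult_def transpose_def grp_block_def)
    then show ?thesis
      by (simp add: matrix_vector_mult_def)
  qed
  then show ?thesis
    by (simp add: matrix_vector_mul_assoc vec_eq_iff grp_block_def)
qed

lemma norm_groupwise_orthogonal_block:
  assumes "groupwise_orthogonal X grp c"
  shows "(norm (X *v grp_block grp g w))\<^sup>2 = c * (norm (grp_block grp g w))\<^sup>2"
proof -
  have "(norm (X *v grp_block grp g w))\<^sup>2
      = grp_block grp g (transpose X *v (X *v grp_block grp g w)) \<bullet> grp_block grp g w"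
    by (simp add: power2_norm_eq_inner inner_matrix_vector_mult_grp_block)
  then show ?thesis
    by (simp add: groupwise_orthogonal_gram[OF assms] power2_norm_eq_inner)
qed

lemma norm_grp_block_transpose_le:
  assumes "groupwise_orthogonal X grp c" and "0 \<le> c"
  shows "norm (grp_block grp g (transpose X *v z)) \<le> sqrt c * norm z"
proof -
  define u where "u = grp_block grp g (transpose X *v z)"
  have "norm (X *v u) = sqrt ((norm (X *v u))\<^sup>2)"
    by simp
  also have "\<dots> = sqrt c * norm u"
    using norm_groupwise_orthogonal_block[OF assms(1), of g "transpose X *v z"]
    by (simp add: u_def real_sqrt_mult)
  finally have "norm (X *v u) = sqrt c * norm u" .
  have "(norm u)\<^sup>2 = z \<bullet> (X *v u)"
    by (simp add: u_def inner_matrix_vector_mult_grp_block grp_block_grp_block power2_norm_eq_inner)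
  also have "\<dots> \<le> norm z * norm (X *v u)"
    by (rule norm_cauchy_schwarz)
  also have "\<dots> = (sqrt c * norm z) * norm u"
    using \<open>norm (X *v u) = sqrt c * norm u\<close> by simp
  finally have "(norm u)\<^sup>2 \<le> (sqrt c * norm z) * norm u" .
  then show ?thesis
    unfolding u_def[symmetric] by (rule le_if_power2_le_mult) (simp add: assms(2))
qed

lemma norm_grp_block_transpose_diff_le:
  assumes "groupwise_orthogonal X grp c" and "0 \<le> c"
  shows "norm (grp_block grp g (transpose X *v a))
           \<le> norm (grp_block grp g (transpose X *v b)) + sqrt c * norm (a - b)"
proof -
  have "grp_block grp g (transpose X *v a)
      = grp_block grp g (transpose X *v b) + grp_block grp g (transpose X *v (a - b))"
    by (simp add: grp_block_diff matrix_vector_mult_diff_distrib)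
  then have "norm (grp_block grp g (transpose X *v a))
      \<le> norm (grp_block grp g (transpose X *v b)) + norm (grp_block grp g (transpose X *v (a - b)))"
    by (simp add: norm_triangle_ineq)
  also have "\<dots> \<le> norm (grp_block grp g (transpose X *v b)) + sqrt c * norm (a - b)"
    using norm_grp_block_transpose_le[OF assms] by (rule add_left_mono)
  finally show ?thesis .
qed

lemma norm_sub_groupwise_projection:
  assumes "groupwise_orthogonal X grp c" and "0 < c"
  shows "(norm (y - (1 / c) *\<^sub>R (X *v grp_block grp g (transpose X *v y))))\<^sup>2
           = (norm y)\<^sup>2 - (norm (grp_block grp g (transpose X *v y)))\<^sup>2 / c"
proof -
  define a where "a = grp_block grp g (transpose X *v y)"
  have "y \<bullet> (X *v a) = (norm a)\<^sup>2"
    by (simp add: a_def inner_matrix_vector_mult_grp_block power2_norm_eq_inner)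
  moreover have "(norm (X *v a))\<^sup>2 = c * (norm a)\<^sup>2"
    unfolding a_def by (rule norm_groupwise_orthogonal_block[OF assms(1)])
  moreover have "(norm (y - (1 / c) *\<^sub>R (X *v a)))\<^sup>2
      = (norm y)\<^sup>2 - 2 * (1 / c) * (y \<bullet> (X *v a)) + (1 / c)\<^sup>2 * (norm (X *v a))\<^sup>2"
    using norm_scaleR_diff_power2[of 1 y "1 / c" "X *v a"] by simp
  ultimately show ?thesis
    using assms(2) by (simp add: a_def power2_eq_square field_simps)
qed

section \<open>Optimality conditions of the group lasso\<close>

lemma nonneg_if_quadratic_nonneg_near_0:
  fixes a b :: real
  assumes "\<And>t. 0 < t \<Longrightarrow> t \<le> 1 \<Longrightarrow> 0 \<le> a * t + b * t\<^sup>2"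
  shows "0 \<le> a"
proof (rule ccontr)
  assume "\<not> 0 \<le> a"
  define t where "t = min 1 (- a / (\<bar>b\<bar> + 1))"
  have "0 < - a / (\<bar>b\<bar> + 1)"
    using \<open>\<not> 0 \<le> a\<close> by (intro divide_pos_pos) auto
  then have t: "0 < t" "t \<le> 1"
    by (auto simp: t_def)
  have "t * (\<bar>b\<bar> + 1) \<le> - a"
    by (simp add: t_def min_le_iff_disj pos_le_divide_eq[symmetric] del: min_less_iff_disj)
  then have "\<bar>b\<bar> * t < - a"
    using t by (simp add: algebra_simps)
  moreover have "b * t \<le> \<bar>b\<bar> * t"
    using t by (simp add: mult_right_mono)
  ultimately have "a + b * t < 0"
    by linarith
  then have "a * t + b * t\<^sup>2 < 0"
    using t mult_pos_neg[of t "a + b * t"] by (simp add: power2_eq_square algebra_simps)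
  with assms[OF t] show False
    by simp
qed

lemma group_lasso_obj_eq:
  fixes X :: "real^'p^'n" and grp :: "'p::finite \<Rightarrow> 'g::finite"
  shows "group_lasso_obj X y grp lam \<beta>
    = (norm (y - X *v \<beta>))\<^sup>2 / (2 * real CARD('n))
      + lam * (\<Sum>g\<in>UNIV. group_weight grp g * norm (grp_block grp g \<beta>))"
  unfolding group_lasso_obj_def by (simp add: sum_grp_block flip: vec.sum)

lemma group_lasso_obj_block_update:
  fixes X :: "real^'p^'n" and grp :: "'p::finite \<Rightarrow> 'g::finite" and h :: 'g and v :: "real^'p"
  defines "u \<equiv> grp_block grp h v"
  shows "group_lasso_obj X y grp lam (\<beta> + t *\<^sub>R u) - group_lasso_obj X y grp lam \<beta>
    = (t\<^sup>2 * (norm (X *v u))\<^sup>2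
        - 2 * t * (grp_block grp h (transpose X *v (y - X *v \<beta>)) \<bullet> u)) / (2 * real CARD('n))
      + lam * group_weight grp h * (norm (grp_block grp h \<beta> + t *\<^sub>R u) - norm (grp_block grp h \<beta>))"
proof -
  define r where "r = y - X *v \<beta>"
  have "(norm (y - X *v (\<beta> + t *\<^sub>R u)))\<^sup>2 = (norm (1 *\<^sub>R r - t *\<^sub>R (X *v u)))\<^sup>2"
    by (simp add: r_def matrix_vector_right_distrib algebra_simps)
  also have "\<dots> = (norm r)\<^sup>2 - 2 * t * (grp_block grp h (transpose X *v r) \<bullet> u) + t\<^sup>2 * (norm (X *v u))\<^sup>2"
    using norm_scaleR_diff_power2[of 1 r t "X *v u"]
    by (simp add: u_def inner_matrix_vector_mult_grp_block grp_block_grp_block)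
  finally have fit: "(norm (y - X *v (\<beta> + t *\<^sub>R u)))\<^sup>2
      = (norm r)\<^sup>2 - 2 * t * (grp_block grp h (transpose X *v r) \<bullet> u) + t\<^sup>2 * (norm (X *v u))\<^sup>2" .
  have "grp_block grp g (\<beta> + t *\<^sub>R u)
      = (if g = h then grp_block grp h \<beta> + t *\<^sub>R u else grp_block grp g \<beta>)" for g
    by (simp add: u_def grp_block_add grp_block_scaleR grp_block_grp_block)
  then have pen: "(\<Sum>g\<in>UNIV. group_weight grp g * norm (grp_block grp g (\<beta> + t *\<^sub>R u)))
      = (\<Sum>g\<in>UNIV. group_weight grp g * norm (grp_block grp g \<beta>))
        + group_weight grp h * (norm (grp_block grp h \<beta> + t *\<^sub>R u) - norm (grp_block grp h \<beta>))"
    by (simp add: if_distrib sum.If_cases Diff_eq algebra_simps sum.remove[of UNIV h])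
  show ?thesis
    unfolding group_lasso_obj_eq fit pen r_def
    by (simp add: diff_divide_distrib add_divide_distrib algebra_simps)
qed

lemma group_lasso_sol_block_inner:
  fixes X :: "real^'p^'n" and grp :: "'p::finite \<Rightarrow> 'g::finite"
  assumes "is_group_lasso_sol X y grp lam \<beta>"
  shows "real CARD('n) * lam * group_weight grp h * norm (grp_block grp h \<beta>)
           \<le> grp_block grp h (transpose X *v (y - X *v \<beta>)) \<bullet> grp_block grp h \<beta>"
proof -
  define n where "n = real CARD('n)"
  define u where "u = grp_block grp h \<beta>"
  define \<rho> where "\<rho> = grp_block grp h (transpose X *v (y - X *v \<beta>)) \<bullet> u"
  have "0 < n"
    by (simp add: n_def)
  have "0 \<le> (\<rho> / n - lam * group_weight grp h * norm u) * t + (norm (X *v u))\<^sup>2 / (2 * n) * t\<^sup>2"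
    if "0 < t" "t \<le> 1" for t
  proof -
    have "0 \<le> group_lasso_obj X y grp lam (\<beta> + (- t) *\<^sub>R u) - group_lasso_obj X y grp lam \<beta>"
      using assms by (simp add: is_group_lasso_sol_def)
    also have "\<dots> = ((- t)\<^sup>2 * (norm (X *v u))\<^sup>2 - 2 * (- t) * \<rho>) / (2 * n)
        + lam * group_weight grp h * (norm (u + (- t) *\<^sub>R u) - norm u)"
      unfolding u_def \<rho>_def n_def by (rule group_lasso_obj_block_update)
    also have "u + (- t) *\<^sub>R u = (1 - t) *\<^sub>R u"
      by (simp add: algebra_simps)
    also have "norm ((1 - t) *\<^sub>R u) = (1 - t) * norm u"
      using that by simp
    finally show ?thesis
      using \<open>0 < n\<close> by (simp add: field_simps power2_eq_square)
  qed
  then have "0 \<le> \<rho> / n - lam * group_weight grp h * norm u"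
    by (rule nonneg_if_quadratic_nonneg_near_0)
  then show ?thesis
    by (simp add: n_def u_def \<rho>_def field_simps)
qed

lemma group_lasso_sol_block_dual_feasible:
  fixes X :: "real^'p^'n" and grp :: "'p::finite \<Rightarrow> 'g::finite"
  assumes "is_group_lasso_sol X y grp lam \<beta>" and "0 \<le> lam"
  shows "norm (grp_block grp h (transpose X *v (y - X *v \<beta>))) \<le> real CARD('n) * lam * group_weight grp h"
proof -
  define n where "n = real CARD('n)"
  define u where "u = grp_block grp h (transpose X *v (y - X *v \<beta>))"
  have "0 < n"
    by (simp add: n_def)
  have "0 \<le> (lam * group_weight grp h * norm u - (norm u)\<^sup>2 / n) * t + (norm (X *v u))\<^sup>2 / (2 * n) * t\<^sup>2"
    if "0 < t" "t \<le> 1" for t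
  proof -
    have "norm (grp_block grp h \<beta> + t *\<^sub>R u) - norm (grp_block grp h \<beta>) \<le> t * norm u"
      using norm_triangle_ineq[of "grp_block grp h \<beta>" "t *\<^sub>R u"] that by simp
    then have penalty: "lam * group_weight grp h * (norm (grp_block grp h \<beta> + t *\<^sub>R u) - norm (grp_block grp h \<beta>))
        \<le> lam * group_weight grp h * (t * norm u)"
      using assms(2) by (simp add: mult_left_mono)
    have "0 \<le> group_lasso_obj X y grp lam (\<beta> + t *\<^sub>R u) - group_lasso_obj X y grp lam \<beta>"
      using assms(1) by (simp add: is_group_lasso_sol_def)
    also have "\<dots> = (t\<^sup>2 * (norm (X *v u))\<^sup>2 - 2 * t * (norm u)\<^sup>2) / (2 * n)
        + lam * group_weight grp h * (norm (grp_block grp h \<beta> + t *\<^sub>R u) - norm (grp_block grp h \<beta>))"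
      using group_lasso_obj_block_update[of X y grp lam \<beta> t h "transpose X *v (y - X *v \<beta>)"]
      by (simp add: u_def n_def power2_norm_eq_inner)
    finally have "0 \<le> (t\<^sup>2 * (norm (X *v u))\<^sup>2 - 2 * t * (norm u)\<^sup>2) / (2 * n)
        + lam * group_weight grp h * (t * norm u)"
      using penalty by linarith
    also have "\<dots> = (lam * group_weight grp h * norm u - (norm u)\<^sup>2 / n) * t
        + (norm (X *v u))\<^sup>2 / (2 * n) * t\<^sup>2"
      using \<open>0 < n\<close> by (simp add: field_simps power2_eq_square)
    finally show ?thesis .
  qed
  then have "0 \<le> lam * group_weight grp h * norm u - (norm u)\<^sup>2 / n"
    by (rule nonneg_if_quadratic_nonneg_near_0)
  then have "(norm u)\<^sup>2 \<le> (n * lam * group_weight grp h) * norm u"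
    using \<open>0 < n\<close> by (simp add: field_simps)
  then show ?thesis
    unfolding u_def[symmetric] n_def[symmetric]
    by (rule le_if_power2_le_mult) (use assms(2) \<open>0 < n\<close> in simp)
qed

lemma group_lasso_sol_block_eq_0:
  fixes X :: "real^'p^'n" and grp :: "'p::finite \<Rightarrow> 'g::finite"
  assumes "is_group_lasso_sol X y grp lam \<beta>"
    and "norm (grp_block grp g (transpose X *v (y - X *v \<beta>))) < real CARD('n) * lam * group_weight grp g"
  shows "grp_block grp g \<beta> = 0"
proof (rule ccontr)
  assume "grp_block grp g \<beta> \<noteq> 0"
  have "real CARD('n) * lam * group_weight grp g * norm (grp_block grp g \<beta>)
      \<le> norm (grp_block grp g (transpose X *v (y - X *v \<beta>))) * norm (grp_block grp g \<beta>)"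
    using group_lasso_sol_block_inner[OF assms(1)] norm_cauchy_schwarz order_trans by blast
  with assms(2) \<open>grp_block grp g \<beta> \<noteq> 0\<close> show False
    by simp
qed

lemma group_lasso_sol_variational:
  fixes X :: "real^'p^'n" and grp :: "'p::finite \<Rightarrow> 'g::finite"
  assumes "is_group_lasso_sol X y grp lam \<beta>" and "0 \<le> lam"
    and "\<And>h. norm (grp_block grp h (transpose X *v z)) \<le> group_weight grp h"
  shows "real CARD('n) * lam * ((X *v \<beta>) \<bullet> z) \<le> (X *v \<beta>) \<bullet> (y - X *v \<beta>)"
proof -
  have "(X *v \<beta>) \<bullet> z = (\<Sum>h\<in>UNIV. grp_block grp h \<beta> \<bullet> grp_block grp h (transpose X *v z))"
    by (simp add: inner_matrix_vector_mult_transpose flip: inner_eq_sum_grp_block)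
  also have "\<dots> \<le> (\<Sum>h\<in>UNIV. group_weight grp h * norm (grp_block grp h \<beta>))"
  proof (rule sum_mono)
    fix h
    have "grp_block grp h \<beta> \<bullet> grp_block grp h (transpose X *v z)
        \<le> norm (grp_block grp h \<beta>) * norm (grp_block grp h (transpose X *v z))"
      by (rule norm_cauchy_schwarz)
    also have "\<dots> \<le> norm (grp_block grp h \<beta>) * group_weight grp h"
      using assms(3) by (simp add: mult_left_mono)
    finally show "grp_block grp h \<beta> \<bullet> grp_block grp h (transpose X *v z)
        \<le> group_weight grp h * norm (grp_block grp h \<beta>)"
      by (simp add: mult.commute)
  qed
  finally have "real CARD('n) * lam * ((X *v \<beta>) \<bullet> z)
      \<le> real CARD('n) * lam * (\<Sum>h\<in>UNIV. group_weight grp h * norm (grp_block grp h \<beta>))"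
    using assms(2) by (simp add: mult_left_mono)
  also have "\<dots> = (\<Sum>h\<in>UNIV. real CARD('n) * lam * group_weight grp h * norm (grp_block grp h \<beta>))"
    by (simp add: sum_distrib_left mult.assoc)
  also have "\<dots> \<le> (\<Sum>h\<in>UNIV. grp_block grp h \<beta> \<bullet> grp_block grp h (transpose X *v (y - X *v \<beta>)))"
    using group_lasso_sol_block_inner[OF assms(1)] by (intro sum_mono) (simp add: inner_commute)
  also have "\<dots> = (X *v \<beta>) \<bullet> (y - X *v \<beta>)"
    by (simp add: inner_matrix_vector_mult_transpose flip: inner_eq_sum_grp_block)
  finally show ?thesis .
qed

section \<open>The screening ball\<close>

lemma norm_grp_block_le_lambda_max:
  fixes X :: "real^'p^'n" and grp :: "'p::finite \<Rightarrow> 'g::finite"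
  assumes "0 < grp_size grp h"
  shows "norm (grp_block grp h (transpose X *v y)) \<le> real CARD('n) * lambda_max X y grp * group_weight grp h"
proof -
  have "norm (grp_block grp h (transpose X *v y)) / (real CARD('n) * group_weight grp h) \<le> lambda_max X y grp"
    unfolding lambda_max_def by (rule Max_ge) auto
  then show ?thesis
    using assms by (simp add: field_simps)
qed

lemma group_lasso_sol_inner_fit_le:
  fixes X :: "real^'p^'n" and grp :: "'p::finite \<Rightarrow> 'g::finite"
  assumes "is_group_lasso_sol X y grp lam \<beta>" and "0 \<le> lam" and "0 < lm"
    and "\<And>h. norm (grp_block grp h (transpose X *v y)) \<le> real CARD('n) * lm * group_weight grp h"
  shows "lam * ((X *v \<beta>) \<bullet> y) \<le> lm * ((X *v \<beta>) \<bullet> (y - X *v \<beta>))"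
proof -
  define n where "n = real CARD('n)"
  have "0 < n"
    by (simp add: n_def)
  \<comment> \<open>\<open>y / (n lm)\<close> is dual feasible, so the variational inequality applies to it.\<close>
  have "norm (grp_block grp h (transpose X *v ((1 / (n * lm)) *\<^sub>R y))) \<le> group_weight grp h" for h
    using assms(4)[of h] assms(3) \<open>0 < n\<close>
    by (simp add: n_def matrix_vector_mult_scaleR grp_block_scaleR field_simps)
  then have "n * lam * ((X *v \<beta>) \<bullet> ((1 / (n * lm)) *\<^sub>R y)) \<le> (X *v \<beta>) \<bullet> (y - X *v \<beta>)"
    unfolding n_def by (rule group_lasso_sol_variational[OF assms(1,2)])
  then show ?thesis
    using assms(3) \<open>0 < n\<close> by (simp add: field_simps)
qed

lemma group_lasso_sol_inner_projection_le:
  fixes X :: "real^'p^'n" and grp :: "'p::finite \<Rightarrow> 'g::finite"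
  assumes "is_group_lasso_sol X y grp lam \<beta>" and "0 \<le> lam" and "0 \<le> lm"
    and "norm (grp_block grp g (transpose X *v y)) = real CARD('n) * lm * group_weight grp g"
  shows "lm * ((y - X *v \<beta>) \<bullet> (X *v grp_block grp g (transpose X *v y)))
           \<le> lam * (y \<bullet> (X *v grp_block grp g (transpose X *v y)))"
proof -
  define K where "K = norm (grp_block grp g (transpose X *v y))"
  have "(y - X *v \<beta>) \<bullet> (X *v grp_block grp g (transpose X *v y))
      = grp_block grp g (transpose X *v (y - X *v \<beta>)) \<bullet> grp_block grp g (transpose X *v y)"
    by (rule inner_matrix_vector_mult_grp_block)
  also have "\<dots> \<le> norm (grp_block grp g (transpose X *v (y - X *v \<beta>))) * K"
    unfolding K_def by (rule norm_cauchy_schwarz)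
  also have "\<dots> \<le> real CARD('n) * lam * group_weight grp g * K"
    using group_lasso_sol_block_dual_feasible[OF assms(1,2)] by (simp add: K_def mult_right_mono)
  finally have "lm * ((y - X *v \<beta>) \<bullet> (X *v grp_block grp g (transpose X *v y)))
      \<le> lm * (real CARD('n) * lam * group_weight grp g * K)"
    using assms(3) by (simp add: mult_left_mono)
  also have "\<dots> = lam * K\<^sup>2"
    using assms(4) by (simp add: K_def power2_eq_square)
  also have "K\<^sup>2 = y \<bullet> (X *v grp_block grp g (transpose X *v y))"
    by (simp add: K_def inner_matrix_vector_mult_grp_block grp_block_grp_block power2_norm_eq_inner)
  finally show ?thesis .
qed

lemma norm_screening_ball:
  fixes y r p :: "'a::real_inner"
  assumes "0 \<le> lm" and "lam \<le> lm"
    and "lam * ((y - r) \<bullet> y) \<le> lm * ((y - r) \<bullet> r)"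
    and "lm * (r \<bullet> p) \<le> lam * (y \<bullet> p)"
  shows "norm ((2 * lm) *\<^sub>R r - ((lam + lm) *\<^sub>R y - (lm - lam) *\<^sub>R p)) \<le> (lm - lam) * norm (y - p)"
proof -
  define U where "U = lm *\<^sub>R r - lam *\<^sub>R y"
  define D where "D = (lm - lam) *\<^sub>R (y - p)"
  \<comment> \<open>The hypotheses give \<open>U \<bullet> (U - D) \<le> 0\<close>: \<open>U\<close> lies in the ball with diameter \<open>[0, D]\<close>.\<close>
  have "0 \<le> U \<bullet> (y - r)"
    using assms(3) by (simp add: U_def inner_diff_left inner_diff_right inner_commute algebra_simps)
  then have "0 \<le> lm * (U \<bullet> (y - r))"
    using assms(1) by simp
  moreover have "U \<bullet> p \<le> 0"
    using assms(4) by (simp add: U_def inner_diff_left)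
  then have "(lm - lam) * (U \<bullet> p) \<le> 0"
    using assms(2) by (simp add: mult_nonneg_nonpos)
  moreover have "U \<bullet> (U - D) = - lm * (U \<bullet> (y - r)) + (lm - lam) * (U \<bullet> p)"
    by (simp add: U_def D_def inner_diff_right inner_add_right algebra_simps)
  ultimately have "U \<bullet> (U - D) \<le> 0"
    by linarith
  then have "(norm (2 *\<^sub>R U - D))\<^sup>2 \<le> (norm D)\<^sup>2"
    unfolding power2_norm_eq_inner by (simp add: inner_diff_left inner_diff_right inner_commute algebra_simps)
  then have "norm (2 *\<^sub>R U - D) \<le> norm D"
    by (rule power2_le_imp_le) simp
  moreover have "(2 * lm) *\<^sub>R r - ((lam + lm) *\<^sub>R y - (lm - lam) *\<^sub>R p) = 2 *\<^sub>R U - D"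
    by (simp add: U_def D_def algebra_simps) (simp add: mult_2_right flip: scaleR_add_left)
  ultimately show ?thesis
    using assms(2) by (simp add: D_def)
qed

lemma group_lasso_screening_bound:
  fixes X :: "real^'p^'n" and y :: "real^'n" and grp :: "'p::finite \<Rightarrow> 'g::finite" and gs :: 'g
  defines "n \<equiv> real CARD('n)"
  defines "vbar \<equiv> X *v grp_block grp gs (transpose X *v y)"
  assumes orth: "groupwise_orthogonal X grp n"
    and sol: "is_group_lasso_sol X y grp lam \<beta>"
    and "0 \<le> lam" and "lam \<le> lm" and "0 < lm"
    and lm_bound: "\<And>h. norm (grp_block grp h (transpose X *v y)) \<le> n * lm * group_weight grp h"
    and lm_attained: "norm (grp_block grp gs (transpose X *v y)) = n * lm * group_weight grp gs"
  shows "2 * lm * norm (grp_block grp g (transpose X *v (y - X *v \<beta>)))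
           \<le> norm (grp_block grp g (transpose X *v ((lam + lm) *\<^sub>R y - (lm - lam) *\<^sub>R ((1 / n) *\<^sub>R vbar))))
             + sqrt n * ((lm - lam) * norm (y - (1 / n) *\<^sub>R vbar))"
proof -
  define r where "r = y - X *v \<beta>"
  define c where "c = (lam + lm) *\<^sub>R y - (lm - lam) *\<^sub>R ((1 / n) *\<^sub>R vbar)"
  have "0 < n"
    by (simp add: n_def)
  have "norm ((2 * lm) *\<^sub>R r - c) \<le> (lm - lam) * norm (y - (1 / n) *\<^sub>R vbar)"
    unfolding c_def
  proof (rule norm_screening_ball)
    show "lam * ((y - r) \<bullet> y) \<le> lm * ((y - r) \<bullet> r)"
      using group_lasso_sol_inner_fit_le[OF sol \<open>0 \<le> lam\<close> \<open>0 < lm\<close>] lm_bound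
      by (simp add: r_def n_def)
    have "lm * (r \<bullet> vbar) \<le> lam * (y \<bullet> vbar)"
      using group_lasso_sol_inner_projection_le[OF sol \<open>0 \<le> lam\<close>] \<open>0 < lm\<close> lm_attained
      by (simp add: r_def vbar_def n_def)
    then show "lm * (r \<bullet> (1 / n) *\<^sub>R vbar) \<le> lam * (y \<bullet> (1 / n) *\<^sub>R vbar)"
      using \<open>0 < n\<close> by (simp add: divide_right_mono mult.left_commute[of _ "1 / n"])
  qed (use \<open>lam \<le> lm\<close> \<open>0 < lm\<close> in auto)
  then have "norm (grp_block grp g (transpose X *v ((2 * lm) *\<^sub>R r)))
      \<le> norm (grp_block grp g (transpose X *v c)) + sqrt n * ((lm - lam) * norm (y - (1 / n) *\<^sub>R vbar))"
    using norm_grp_block_transpose_diff_le[OF orth, of g "(2 * lm) *\<^sub>R r" c] \<open>0 < n\<close>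
    by (smt (verit) mult_left_mono real_sqrt_ge_zero)
  then show ?thesis
    using \<open>0 < lm\<close> by (simp add: r_def c_def matrix_vector_mult_scaleR grp_block_scaleR)
qed

lemma group_lasso_screening_rule:
  fixes X :: "real^'p^'n" and y :: "real^'n" and grp :: "'p::finite \<Rightarrow> 'g::finite" and gs :: 'g
  defines "n \<equiv> real CARD('n)"
  defines "vbar \<equiv> X *v grp_block grp gs (transpose X *v y)"
  assumes orth: "groupwise_orthogonal X grp n"
    and sol: "is_group_lasso_sol X y grp lam \<beta>"
    and "0 < lam" and "lam \<le> lm"
    and lm_bound: "\<And>h. norm (grp_block grp h (transpose X *v y)) \<le> n * lm * group_weight grp h"
    and lm_attained: "norm (grp_block grp gs (transpose X *v y)) = n * lm * group_weight grp gs"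
    and rule: "sqrt ((lam + lm)\<^sup>2 * (norm (grp_block grp g (transpose X *v y)))\<^sup>2
                 - 2 * (lm\<^sup>2 - lam\<^sup>2) * (grp_block grp g (transpose X *v y) \<bullet> grp_block grp g (transpose X *v vbar)) / n
                 + (lm - lam)\<^sup>2 * (norm (grp_block grp g (transpose X *v vbar)))\<^sup>2 / n\<^sup>2)
               < 2 * n * lam * lm * group_weight grp g
                 - (lm - lam) * sqrt (n * (norm y)\<^sup>2 - n\<^sup>2 * lm\<^sup>2 * real (grp_size grp gs))"
  shows "grp_block grp g \<beta> = 0"
proof -
  define c where "c = (lam + lm) *\<^sub>R y - (lm - lam) *\<^sub>R ((1 / n) *\<^sub>R vbar)"
  have "0 < n"
    by (simp add: n_def)
  have "2 * lm * norm (grp_block grp g (transpose X *v (y - X *v \<beta>)))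
      \<le> norm (grp_block grp g (transpose X *v c)) + sqrt n * ((lm - lam) * norm (y - (1 / n) *\<^sub>R vbar))"
    unfolding c_def n_def vbar_def
    by (rule group_lasso_screening_bound[OF orth[unfolded n_def] sol])
      (use \<open>0 < lam\<close> \<open>lam \<le> lm\<close> lm_bound lm_attained in \<open>simp_all add: n_def\<close>)
  also have "norm (grp_block grp g (transpose X *v c))
      = sqrt ((lam + lm)\<^sup>2 * (norm (grp_block grp g (transpose X *v y)))\<^sup>2
          - 2 * (lm\<^sup>2 - lam\<^sup>2) * (grp_block grp g (transpose X *v y) \<bullet> grp_block grp g (transpose X *v vbar)) / n
          + (lm - lam)\<^sup>2 * (norm (grp_block grp g (transpose X *v vbar)))\<^sup>2 / n\<^sup>2)"
  proof -
    have "grp_block grp g (transpose X *v c)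
        = (lam + lm) *\<^sub>R grp_block grp g (transpose X *v y) - ((lm - lam) / n) *\<^sub>R grp_block grp g (transpose X *v vbar)"
      by (simp add: c_def matrix_vector_mult_diff_distrib matrix_vector_mult_scaleR grp_block_diff grp_block_scaleR)
    then show ?thesis
      using \<open>0 < n\<close>
      by (intro real_sqrt_unique[symmetric]) (simp_all only: norm_scaleR_diff_power2 norm_ge_zero,
          simp add: power_divide field_simps power2_eq_square)
  qed
  also have "sqrt n * ((lm - lam) * norm (y - (1 / n) *\<^sub>R vbar))
      = (lm - lam) * sqrt (n * (norm y)\<^sup>2 - n\<^sup>2 * lm\<^sup>2 * real (grp_size grp gs))"
  proof -
    have "(norm (grp_block grp gs (transpose X *v y)))\<^sup>2 = n\<^sup>2 * lm\<^sup>2 * real (grp_size grp gs)"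
      by (simp add: lm_attained power_mult_distrib)
    then have "(norm (y - (1 / n) *\<^sub>R vbar))\<^sup>2 = (norm y)\<^sup>2 - n\<^sup>2 * lm\<^sup>2 * real (grp_size grp gs) / n"
      using norm_sub_groupwise_projection[OF orth \<open>0 < n\<close>, of y gs] by (simp add: vbar_def)
    then have pythagoras: "n * (norm y)\<^sup>2 - n\<^sup>2 * lm\<^sup>2 * real (grp_size grp gs)
        = n * (norm (y - (1 / n) *\<^sub>R vbar))\<^sup>2"
      using \<open>0 < n\<close> by (simp add: right_diff_distrib power2_eq_square)
    then show ?thesis
      by (simp add: pythagoras real_sqrt_mult)
  qed
  finally have "2 * lm * norm (grp_block grp g (transpose X *v (y - X *v \<beta>)))
      < 2 * lm * (n * lam * group_weight grp g)"
    using rule by (simp add: mult_ac)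
  then show ?thesis
    using sol \<open>0 < lam\<close> \<open>lam \<le> lm\<close> by (intro group_lasso_sol_block_eq_0) (simp_all add: n_def mult.assoc)
qed

theorem theorem4p2:
  fixes X :: "real ^ 'p ^ 'n" and y :: "real ^ 'n" and grp :: "'p \<Rightarrow> 'g::finite"
    and gs :: 'g and lam :: real and \<beta> :: "real ^ 'p" and g :: 'g
  defines "n \<equiv> real CARD('n)"
  defines "lm \<equiv> lambda_max X y grp"
  defines "Ws \<equiv> real (grp_size grp gs)"
  defines "vbar \<equiv> X *v grp_block grp gs (transpose X *v y)"
  assumes y_centered: "(\<Sum>i\<in>UNIV. y $ i) = 0"
    and X_centered: "\<And>j. (\<Sum>i\<in>UNIV. X $ i $ j) = 0"
    and X_scaled: "\<And>j. (1 / n) * (\<Sum>i\<in>UNIV. (X $ i $ j)\<^sup>2) = 1"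
    and groups_nonempty: "\<And>h. \<exists>j. grp j = h"
    and X_orth: "\<And>j k. grp j = grp k \<Longrightarrow>
                  (1 / n) * (\<Sum>i\<in>UNIV. X $ i $ j * X $ i $ k) = (if j = k then 1 else 0)"
    and gs_max: "norm (grp_block grp gs (transpose X *v y)) / (n * sqrt Ws) = lm"
    and lam_pos: "0 < lam" and lam_le: "lam \<le> lm"
    and sol: "is_group_lasso_sol X y grp lam \<beta>"
    and rule: "sqrt ((lam + lm)\<^sup>2 * (norm (grp_block grp g (transpose X *v y)))\<^sup>2
                 - 2 * (lm\<^sup>2 - lam\<^sup>2) * (grp_block grp g (transpose X *v y) \<bullet> grp_block grp g (transpose X *v vbar)) / n
                 + (lm - lam)\<^sup>2 * (norm (grp_block grp g (transpose X *v vbar)))\<^sup>2 / n\<^sup>2)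
               < 2 * n * lam * lm * sqrt (real (grp_size grp g))
                 - (lm - lam) * sqrt (n * (norm y)\<^sup>2 - n\<^sup>2 * lm\<^sup>2 * Ws)"
  shows "grp_block grp g \<beta> = 0"
proof -
  have "0 < n"
    by (simp add: n_def)
  have orth: "groupwise_orthogonal X grp n"
    using X_orth \<open>0 < n\<close> by (auto simp: groupwise_orthogonal_def field_simps split: if_splits)
  have size_pos: "0 < grp_size grp h" for h
    using groups_nonempty grp_size_pos by metis
  have lm_bound: "norm (grp_block grp h (transpose X *v y)) \<le> n * lm * group_weight grp h" for h
    unfolding n_def lm_def by (rule norm_grp_block_le_lambda_max[OF size_pos])
  have lm_attained: "norm (grp_block grp gs (transpose X *v y)) = n * lm * group_weight grp gs"
    using gs_max \<open>0 < n\<close> size_pos[of gs] by (simp add: Ws_def field_simps)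
  show ?thesis
    using group_lasso_screening_rule[OF orth[unfolded n_def] sol lam_pos lam_le] lm_bound lm_attained rule
    by (simp add: n_def vbar_def Ws_def)
qed

end
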